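(* Let $n\ge 2$ and let $(u,v)$ be an MAB pair of binary words with $|u|=|v|=n$. Put $i=\mathrm{lsb}(u,v)$ and $j=\mathrm{lsb}(v,u)$. Then $i+j\le n$ if and only if there exist words $\alpha,\beta,\beta',\alpha'\in\Sigma^+$ and $x,x'\in\Sigma^*$ such that $u=\alpha x\beta$, $v=\beta' x'\alpha'$, $\beta\sim_{\mathrm{abl}}\beta'$, $\alpha\sim_{\mathrm{abl}}\alpha'$, $|\alpha|=j$, $|\beta|=i$, and both $(\beta,\beta')$ and $(\alpha,\alpha')$ are MAU pairs.
   Context: Let $\Sigma=\{a,b\}$. For a word $w$ and a letter $c$, $|w|_c$ denotes the number of occurrences of $c$ in $w$. Two words $x,y$ are abelian equivalent, written $x\sim_{\mathrm{abl}}y$, if $|x|_c=|y|_c$ for all $c\in\Sigma$. For words $u,v$: a pair $(x,y)$ is an internal abelian-border of $(u,v)$ if $x$ is a nonempty proper suffix of $u$, $y$ is a proper prefix of $v$, and $x\sim_{\mathrm{abl}}y$; it is an external abelian-border of $(u,v)$ if $x$ is a nonempty proper prefix of $u$, $y$ is a proper suffix of $v$, and $x\sim_{\mathrm{abl}}y$. The pair $(u,v)$ is mutually abelian-bordered (MAB) if it has both an internal and an external abelian-border, and mutually abelian-unbordered (MAU) if it has neither. If $(u,v)$ has an internal abelian-border, $\mathrm{sb}(u,v)$ denotes its internal abelian-border $(x,y)$ of minimal length and $\mathrm{lsb}(u,v)=|x|$ is that minimal length. *)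

theory Defs
  imports Main "HOL-Library.Sublist"
begin

datatype sigma = a | b

definition abl_eq :: "sigma list \<Rightarrow> sigma list \<Rightarrow> bool" where
  "abl_eq x y \<longleftrightarrow> (\<forall>c. count_list x c = count_list y c)"

definition int_border :: "sigma list \<Rightarrow> sigma list \<Rightarrow> sigma list \<Rightarrow> sigma list \<Rightarrow> bool" where
  "int_border u v x y \<longleftrightarrow> x \<noteq> [] \<and> strict_suffix x u \<and> strict_prefix y v \<and> abl_eq x y"

definition ext_border :: "sigma list \<Rightarrow> sigma list \<Rightarrow> sigma list \<Rightarrow> sigma list \<Rightarrow> bool" where
  "ext_border u v x y \<longleftrightarrow> x \<noteq> [] \<and> strict_prefix x u \<and> strict_suffix y v \<and> abl_eq x y"

definition MAB :: "sigma list \<Rightarrow> sigma list \<Rightarrow> bool" where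
  "MAB u v \<longleftrightarrow> (\<exists>x y. int_border u v x y) \<and> (\<exists>x y. ext_border u v x y)"

definition MAU :: "sigma list \<Rightarrow> sigma list \<Rightarrow> bool" where
  "MAU u v \<longleftrightarrow> \<not> (\<exists>x y. int_border u v x y) \<and> \<not> (\<exists>x y. ext_border u v x y)"

text \<open>Length of the shortest internal abelian-border (meaningful when one exists).\<close>
definition lsb :: "sigma list \<Rightarrow> sigma list \<Rightarrow> nat" where
  "lsb u v = (LEAST k. \<exists>x y. int_border u v x y \<and> length x = k)"

end

theory Submission
  imports Defs
begin

text \<open>Let \<open>\<beta>\<close> and \<open>\<alpha>\<close> be the \<open>u\<close>-components of the shortest internal abelian-borders of
  \<open>(u,v)\<close> and of \<open>(v,u)\<close>; they exist because an external abelian-border of \<open>(u,v)\<close> is an internal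
  one of \<open>(v,u)\<close> read backwards. If \<open>i + j \<le> n\<close> they do not overlap in \<open>u\<close>, and likewise for
  their partners in \<open>v\<close>. A shortest internal abelian-border has no internal abelian-border itself,
  which would be a shorter one of \<open>(u,v)\<close>; and for abelian-equivalent words internal and external
  abelian-borders correspond by passing to the complementary factors, so such a pair is MAU.
  The converse is a length count.\<close>

lemma length_eq_count_list_a_b: "length w = count_list w a + count_list w b"
proof (induction w)
  case (Cons c w)
  then show ?case by (cases c) auto
qed simp

lemma abl_eq_length: "abl_eq x y \<Longrightarrow> length x = length y"
  unfolding abl_eq_def by (metis length_eq_count_list_a_b)

lemma abl_eq_sym: "abl_eq x y \<Longrightarrow> abl_eq y x"
  unfolding abl_eq_def by simp

lemma abl_eq_append_cancel:
  assumes "abl_eq (z @ p) (q @ w)" and "abl_eq p q"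
  shows "abl_eq z w"
  using assms unfolding abl_eq_def by (metis add.commute add_left_cancel count_list_append)

lemma ext_border_iff_int_border: "ext_border u v x y \<longleftrightarrow> int_border v u y x"
  unfolding ext_border_def int_border_def
  by (metis abl_eq_length abl_eq_sym length_0_conv)

lemma int_border_imp_ext_border:
  assumes "abl_eq u v" and "int_border u v x y"
  shows "\<exists>x' y'. ext_border u v x' y'"
proof -
  have x: "x \<noteq> []" "strict_suffix x u" and y: "strict_prefix y v" and xy: "abl_eq x y"
    using assms(2) unfolding int_border_def by auto
  obtain x' where u: "u = x' @ x" "x' \<noteq> []"
    using x(2) unfolding strict_suffix_def suffix_def by auto
  obtain y' where v: "v = y @ y'" "y' \<noteq> []"
    using y unfolding strict_prefix_def prefix_def by auto
  have "y \<noteq> []"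
    using abl_eq_length[OF xy] x(1) by auto
  moreover have "abl_eq x' y'"
    using abl_eq_append_cancel assms(1) xy u v by blast
  ultimately have "ext_border u v x' y'"
    using u v x(1) unfolding ext_border_def
    by (auto simp: strict_prefix_def strict_suffix_def prefix_def suffix_def)
  then show ?thesis by blast
qed

lemma ex_ext_border_iff_ex_int_border:
  assumes "abl_eq u v"
  shows "(\<exists>x y. ext_border u v x y) \<longleftrightarrow> (\<exists>x y. int_border u v x y)"
proof
  assume "\<exists>x y. ext_border u v x y"
  then obtain x y where "int_border v u y x"
    using ext_border_iff_int_border by blast
  then obtain x' y' where "ext_border v u y' x'"
    using int_border_imp_ext_border abl_eq_sym[OF assms] by blast
  then show "\<exists>x y. int_border u v x y"
    using ext_border_iff_int_border by blast
qed (use int_border_imp_ext_border assms in blast)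

lemma MAU_iff_no_int_border:
  "abl_eq u v \<Longrightarrow> MAU u v \<longleftrightarrow> \<not> (\<exists>x y. int_border u v x y)"
  unfolding MAU_def using ex_ext_border_iff_ex_int_border by blast

lemma MAU_commute: "MAU u v \<longleftrightarrow> MAU v u"
  unfolding MAU_def using ext_border_iff_int_border by blast

lemma MAB_iff_int_borders:
  "MAB u v \<longleftrightarrow> (\<exists>x y. int_border u v x y) \<and> (\<exists>x y. int_border v u x y)"
  unfolding MAB_def using ext_border_iff_int_border by blast

lemma int_border_trans:
  "int_border x y p q \<Longrightarrow> int_border u v x y \<Longrightarrow> int_border u v p q"
  unfolding int_border_def
  using prefix_order.less_trans suffix_order.less_trans by blast

lemma lsb_le: "int_border u v x y \<Longrightarrow> lsb u v \<le> length x"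
  unfolding lsb_def by (metis (mono_tags, lifting) Least_le)

lemma obtain_shortest_int_border:
  assumes "int_border u v x y"
  obtains x' y' where "int_border u v x' y'" and "length x' = lsb u v"
proof -
  have "\<exists>x' y'. int_border u v x' y' \<and> length x' = lsb u v"
    unfolding lsb_def by (rule LeastI[where k = "length x"]) (use assms in blast)
  then show ?thesis using that by blast
qed

lemma shortest_int_border_MAU:
  assumes "int_border u v x y" and "length x = lsb u v"
  shows "MAU x y"
proof -
  have "\<not> int_border x y p q" for p q
  proof
    assume pq: "int_border x y p q"
    then have "length p < length x"
      unfolding int_border_def by (simp add: suffix_length_less)
    with lsb_le[OF int_border_trans[OF pq assms(1)]] assms(2) show False by simp
  qed
  moreover have "abl_eq x y"
    using assms(1) unfolding int_border_def by simp
  ultimately show ?thesis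
    using MAU_iff_no_int_border by blast
qed

lemma prefix_suffix_split:
  assumes "prefix p w" and "suffix s w" and "length p + length s \<le> length w"
  obtains x where "w = p @ x @ s"
proof -
  obtain x where w: "w = p @ x"
    using assms(1) unfolding prefix_def by blast
  have "suffix s x"
    using assms(2,3) unfolding w suffix_append by auto
  then show ?thesis
    using that w unfolding suffix_def by blast
qed

theorem mainTheorem1:
  fixes u v :: "sigma list" and n :: nat
  assumes "n \<ge> 2" and "length u = n" and "length v = n" and "MAB u v"
  shows "lsb u v + lsb v u \<le> n \<longleftrightarrow>
    (\<exists>\<alpha> \<beta> \<beta>' \<alpha>' x x'. \<alpha> \<noteq> [] \<and> \<beta> \<noteq> [] \<and> \<beta>' \<noteq> [] \<and> \<alpha>' \<noteq> [] \<and>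
       u = \<alpha> @ x @ \<beta> \<and> v = \<beta>' @ x' @ \<alpha>' \<and>
       abl_eq \<beta> \<beta>' \<and> abl_eq \<alpha> \<alpha>' \<and>
       length \<alpha> = lsb v u \<and> length \<beta> = lsb u v \<and>
       MAU \<beta> \<beta>' \<and> MAU \<alpha> \<alpha>')"
  (is "_ \<longleftrightarrow> ?split")
proof
  assume ?split
  then obtain \<alpha> \<beta> x where "u = \<alpha> @ x @ \<beta>" "length \<alpha> = lsb v u" "length \<beta> = lsb u v"
    by blast
  then show "lsb u v + lsb v u \<le> n"
    using assms(2) by auto
next
  assume len: "lsb u v + lsb v u \<le> n"
  obtain p q r s where pq: "int_border u v p q" and rs: "int_border v u r s"
    using assms(4) unfolding MAB_iff_int_borders by blast
  obtain \<beta> \<beta>' where \<beta>: "int_border u v \<beta> \<beta>'" "length \<beta> = lsb u v"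
    using pq by (rule obtain_shortest_int_border)
  obtain \<alpha>' \<alpha> where \<alpha>: "int_border v u \<alpha>' \<alpha>" "length \<alpha>' = lsb v u"
    using rs by (rule obtain_shortest_int_border)
  have abl: "abl_eq \<beta> \<beta>'" "abl_eq \<alpha> \<alpha>'"
    using \<alpha>(1) \<beta>(1) abl_eq_sym unfolding int_border_def by auto
  have len': "length \<beta>' = lsb u v" "length \<alpha> = lsb v u"
    using abl_eq_length[OF abl(1)] abl_eq_length[OF abl(2)] \<alpha>(2) \<beta>(2) by simp_all
  have "prefix \<alpha> u" "suffix \<beta> u" "prefix \<beta>' v" "suffix \<alpha>' v"
    using \<alpha>(1) \<beta>(1) unfolding int_border_def strict_prefix_def strict_suffix_def by auto
  moreover have "length \<alpha> + length \<beta> \<le> length u" "length \<beta>' + length \<alpha>' \<le> length v"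
    using len len' \<alpha>(2) \<beta>(2) assms(2,3) by auto
  ultimately obtain x x' where "u = \<alpha> @ x @ \<beta>" "v = \<beta>' @ x' @ \<alpha>'"
    by (meson prefix_suffix_split)
  moreover have "MAU \<beta> \<beta>'" "MAU \<alpha> \<alpha>'"
    using shortest_int_border_MAU[OF \<beta>] shortest_int_border_MAU[OF \<alpha>] MAU_commute by auto
  moreover have "\<alpha> \<noteq> []" "\<beta>' \<noteq> []" "\<alpha>' \<noteq> []" "\<beta> \<noteq> []"
    using \<alpha> \<beta> len' unfolding int_border_def by auto
  ultimately show ?split
    using abl \<beta>(2) len'(2) by blast
qed

end
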